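(* Let $k \geq 3$ be an odd integer. Then $h(n,k) \leq \frac{n(3k-1)}{12}$ for every positive integer $n$ with $n \equiv 0 \pmod{\frac{3(k-1)}{2}}$.
   Context: All graphs are finite and simple. A degree monotone path in a graph $G$ is a path $v_1v_2\ldots v_m$ such that $\deg(v_1)\le \cdots\le \deg(v_m)$ or $\deg(v_1)\ge \cdots\ge \deg(v_m)$; its length is its number of vertices. $mp(G)$ denotes the maximum length of a degree monotone path in $G$. For a pair $e$ of non-adjacent vertices, $G+e$ is $G$ with the edge $e$ added. A graph $G$ is $k$-saturated if $mp(G)\le k-1$ and $mp(G+e)\ge k$ for every pair $e$ of non-adjacent vertices of $G$ (so $K_m$ is $k$-saturated for $m\le k-1$). $h(n,k)$ is the minimum number of edges of a $k$-saturated graph on $n$ vertices. *)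

theory Defs
  imports Main
begin

definition simple_graph :: "nat \<Rightarrow> nat set set \<Rightarrow> bool" where
  "simple_graph n E \<longleftrightarrow> (\<forall>e\<in>E. e \<subseteq> {0..<n} \<and> card e = 2)"

definition deg :: "nat set set \<Rightarrow> nat \<Rightarrow> nat" where
  "deg E v = card {u. {u, v} \<in> E}"

text \<open>A path: a nonempty list of distinct vertices, consecutive ones adjacent.
  Its length is its number of vertices.\<close>
definition is_path :: "nat \<Rightarrow> nat set set \<Rightarrow> nat list \<Rightarrow> bool" where
  "is_path n E p \<longleftrightarrow> p \<noteq> [] \<and> distinct p \<and> set p \<subseteq> {0..<n} \<and>
     (\<forall>i. Suc i < length p \<longrightarrow> {p ! i, p ! Suc i} \<in> E)"

definition degree_monotone_path :: "nat \<Rightarrow> nat set set \<Rightarrow> nat list \<Rightarrow> bool" where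
  "degree_monotone_path n E p \<longleftrightarrow> is_path n E p \<and>
     ((\<forall>i. Suc i < length p \<longrightarrow> deg E (p ! i) \<le> deg E (p ! Suc i)) \<or>
      (\<forall>i. Suc i < length p \<longrightarrow> deg E (p ! i) \<ge> deg E (p ! Suc i)))"

definition mp :: "nat \<Rightarrow> nat set set \<Rightarrow> nat" where
  "mp n E = Max {length p | p. degree_monotone_path n E p}"

definition k_saturated :: "nat \<Rightarrow> nat \<Rightarrow> nat set set \<Rightarrow> bool" where
  "k_saturated k n E \<longleftrightarrow> simple_graph n E \<and> mp n E \<le> k - 1 \<and>
     (\<forall>u\<in>{0..<n}. \<forall>v\<in>{0..<n}. u \<noteq> v \<longrightarrow> {u, v} \<notin> E \<longrightarrow> mp n (insert {u, v} E) \<ge> k)"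

definition h :: "nat \<Rightarrow> nat \<Rightarrow> nat" where
  "h n k = Min {card E | E. k_saturated k n E}"

end

theory Submission
  imports Defs
begin

(* Write k = 2t + 1 and n = 3tm. Take m triples of t-cliques A, B1, B2 and join the i-th vertex
   of A to the i-th vertices of B1 and B2. Vertices of A have degree t + 1, those of B1, B2 degree t,
   so twice the number of edges is nt + n/3, i.e. 12 |E| = n (3k - 1).
   Along a degree monotone path the vertices of equal degree form a single run; consecutive
   vertices of a run have the same type, hence lie in the same clique, so every such path has at
   most 2t vertices. Adding a non-edge uv raises the degrees of u and v by one, and in each of the
   cases (u, v both in A-cliques, one in each kind, both in B-cliques) the new edge extends through
   whole cliques to a degree monotone path with 2t + 1 vertices. *)

lemma is_path_iff_successively:
  "is_path n E p \<longleftrightarrow>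
     p \<noteq> [] \<and> distinct p \<and> set p \<subseteq> {0..<n} \<and> successively (\<lambda>a b. {a, b} \<in> E) p"
  unfolding is_path_def successively_conv_nth by blast

lemma is_path_rev: "is_path n E (rev p) \<longleftrightarrow> is_path n E p"
  by (auto simp: is_path_iff_successively successively_rev insert_commute)

lemma degree_monotone_path_iff_sorted_wrt:
  "degree_monotone_path n E p \<longleftrightarrow> is_path n E p \<and>
     (sorted_wrt (\<lambda>a b. deg E a \<le> deg E b) p \<or> sorted_wrt (\<lambda>a b. deg E b \<le> deg E a) p)"
  unfolding degree_monotone_path_def
  by (simp add: sorted_wrt_iff_nth_Suc_transp transp_def)

lemma degree_monotone_pathI:
  assumes "p \<noteq> []" "distinct p" "set p \<subseteq> {0..<n}" "successively (\<lambda>a b. {a, b} \<in> E) p"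
    and "sorted_wrt (\<lambda>a b. deg E b \<le> deg E a) p"
  shows "degree_monotone_path n E p"
  using assms by (simp add: degree_monotone_path_iff_sorted_wrt is_path_iff_successively)

lemma length_degree_monotone_path_le:
  "degree_monotone_path n E p \<Longrightarrow> length p \<le> n"
  unfolding degree_monotone_path_def is_path_def
  by (metis card_atLeastLessThan card_mono distinct_card finite_atLeastLessThan minus_nat.diff_0)

lemma finite_degree_monotone_path_lengths:
  "finite {length p | p. degree_monotone_path n E p}"
  by (rule finite_subset[of _ "{0..n}"]) (auto dest: length_degree_monotone_path_le)

lemma length_le_mp: "degree_monotone_path n E p \<Longrightarrow> length p \<le> mp n E"
  unfolding mp_def using finite_degree_monotone_path_lengths by (intro Max_ge) auto

lemma mp_le:
  assumes "0 < n" and "\<And>p. degree_monotone_path n E p \<Longrightarrow> length p \<le> B"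
  shows "mp n E \<le> B"
proof -
  have "degree_monotone_path n E [0]"
    using assms(1) by (simp add: degree_monotone_path_def is_path_def)
  then show ?thesis
    unfolding mp_def using finite_degree_monotone_path_lengths assms(2)
    by (subst Max_le_iff) auto
qed

lemma finite_neighbours: "simple_graph n E \<Longrightarrow> finite {u. {u, v} \<in> E}"
  by (rule finite_subset[of _ "{0..<n}"]) (auto simp: simple_graph_def)

lemma card_edges_at:
  assumes "simple_graph n E"
  shows "card {e \<in> E. v \<in> e} = deg E v"
proof -
  have "{e \<in> E. v \<in> e} = (\<lambda>u. {u, v}) ` {u. {u, v} \<in> E}"
  proof (intro equalityI subsetI)
    fix e assume e: "e \<in> {e \<in> E. v \<in> e}"
    then have "card e = 2" using assms by (simp add: simple_graph_def)
    then obtain a b where "e = {a, b}" by (meson card_2_iff)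
    with e show "e \<in> (\<lambda>u. {u, v}) ` {u. {u, v} \<in> E}" by (auto simp: insert_commute)
  qed auto
  moreover have "inj_on (\<lambda>u. {u, v}) {u. {u, v} \<in> E}"
    by (auto simp: inj_on_def doubleton_eq_iff)
  ultimately show ?thesis by (simp add: deg_def card_image)
qed

lemma sum_deg_eq_twice_card:
  assumes "simple_graph n E"
  shows "(\<Sum>v<n. deg E v) = 2 * card E"
proof -
  have "E \<subseteq> Pow {0..<n}" using assms by (auto simp: simple_graph_def)
  then have "finite E" by (rule finite_subset) simp
  moreover have "\<forall>e\<in>E. card {v \<in> {..<n}. v \<in> e} = 2"
  proof
    fix e assume "e \<in> E"
    then have "e \<subseteq> {0..<n}" "card e = 2" using assms by (auto simp: simple_graph_def)
    moreover from \<open>e \<subseteq> {0..<n}\<close> have "{v \<in> {..<n}. v \<in> e} = e" by auto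
    ultimately show "card {v \<in> {..<n}. v \<in> e} = 2" by simp
  qed
  ultimately have "(\<Sum>v<n. card {e \<in> E. v \<in> e}) = 2 * card E"
    by (intro sum_multicount) auto
  then show ?thesis using card_edges_at[OF assms] by simp
qed

lemma deg_insert_edge:
  assumes "simple_graph n E" "u \<noteq> v" "{u, v} \<notin> E"
  shows "deg (insert {u, v} E) w = deg E w + (if w = u \<or> w = v then 1 else 0)"
proof -
  have fin: "finite {x. {x, w} \<in> E}" using finite_neighbours[OF assms(1)] .
  consider "w = u" | "w = v" | "w \<noteq> u" "w \<noteq> v" by blast
  then show ?thesis
  proof cases
    case 1
    then have "{x. {x, w} \<in> insert {u, v} E} = insert v {x. {x, w} \<in> E}"
      using assms(2) by (auto simp: doubleton_eq_iff)
    then show ?thesis using 1 fin assms(3) by (simp add: deg_def insert_commute)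
  next
    case 2
    then have "{x. {x, w} \<in> insert {u, v} E} = insert u {x. {x, w} \<in> E}"
      using assms(2) by (auto simp: doubleton_eq_iff)
    then show ?thesis using 2 fin assms(3) by (simp add: deg_def)
  next
    case 3
    then have "{x. {x, w} \<in> insert {u, v} E} = {x. {x, w} \<in> E}" by (auto simp: doubleton_eq_iff)
    then show ?thesis using 3 by (simp add: deg_def)
  qed
qed

lemma h_le_card:
  assumes "k_saturated k n E"
  shows "h n k \<le> card E"
proof -
  have "{card E | E. k_saturated k n E} \<subseteq> card ` Pow (Pow {0..<n})"
    unfolding k_saturated_def simple_graph_def by auto
  then have "finite {card E | E. k_saturated k n E}" by (rule finite_subset) simp
  then show ?thesis unfolding h_def using assms by (intro Min_le) auto
qed

lemma less_3_mult_if_div_3_eq: "(b::nat) div 3 = a div 3 \<Longrightarrow> a < 3 * m \<Longrightarrow> b < 3 * m"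
  by (metis div_less_iff_less_mult mult.commute zero_less_numeral)

lemma card_multiples_of_3_less: "card {c \<in> {..<3 * m}. c mod 3 = 0} = (m::nat)"
proof -
  have "{c \<in> {..<3 * m}. c mod 3 = 0} = (\<lambda>j. 3 * j) ` {..<m}"
    by (auto elim!: dvdE simp flip: dvd_eq_mod_eq_0)
  then show ?thesis by (simp add: card_image inj_on_def)
qed

lemma successively_if_pairwise:
  "(\<And>a b. a \<in> set xs \<Longrightarrow> b \<in> set xs \<Longrightarrow> a \<noteq> b \<Longrightarrow> P a b) \<Longrightarrow> distinct xs \<Longrightarrow>
    successively P xs"
  by (induction xs rule: induct_list012) auto

lemma sorted_wrt_const:
  "(\<And>x. x \<in> set xs \<Longrightarrow> f x = c) \<Longrightarrow> R c c \<Longrightarrow> sorted_wrt (\<lambda>a b. R (f a) (f b)) xs"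
  by (induction xs) auto

lemma sorted_wrt_dropWhile_ge:
  fixes f :: "'a \<Rightarrow> 'b::linorder"
  assumes "sorted_wrt (\<lambda>a b. f a \<le> f b) xs" "x \<in> set (dropWhile (\<lambda>y. f y < c) xs)"
  shows "c \<le> f x"
  using assms by (induction xs) (auto split: if_splits)

text \<open>Vertex \<open>w < N\<close> sits at offset \<open>w mod t\<close> of the block \<open>w div t\<close>; the blocks
  \<open>3j\<close>, \<open>3j + 1\<close>, \<open>3j + 2\<close> form the \<open>j\<close>-th triple, whose A-block is \<open>3j\<close>.\<close>

locale block_graph =
  fixes t m :: nat
  assumes t_pos: "0 < t" and m_pos: "0 < m"
begin

definition N :: nat where "N = 3 * t * m"

definition block :: "nat \<Rightarrow> nat set" where "block c = {t * c ..< t * c + t}"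

definition A_vertex :: "nat \<Rightarrow> bool" where "A_vertex v \<longleftrightarrow> v div t mod 3 = 0"

definition adjacent :: "nat \<Rightarrow> nat \<Rightarrow> bool" where
  "adjacent u v \<longleftrightarrow> u \<noteq> v \<and> (u div t = v div t \<or>
     (u div t div 3 = v div t div 3 \<and> u mod t = v mod t \<and> A_vertex u \<noteq> A_vertex v))"

definition edges :: "nat set set" where
  "edges = {{u, v} | u v. u < N \<and> v < N \<and> adjacent u v}"

definition partner :: "nat \<Rightarrow> nat \<Rightarrow> nat" where "partner c w = t * c + w mod t"

definition cross_blocks :: "nat \<Rightarrow> nat set" where
  "cross_blocks b = {c. c div 3 = b div 3 \<and> (c mod 3 = 0) \<noteq> (b mod 3 = 0)}"

lemma adjacent_sym: "adjacent u v \<longleftrightarrow> adjacent v u"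
  unfolding adjacent_def by auto

lemma mem_edges_iff: "{x, y} \<in> edges \<longleftrightarrow> x < N \<and> y < N \<and> adjacent x y"
proof
  assume "{x, y} \<in> edges"
  then obtain u v where "{x, y} = {u, v}" "u < N" "v < N" "adjacent u v"
    unfolding edges_def by blast
  then show "x < N \<and> y < N \<and> adjacent x y" by (metis adjacent_sym doubleton_eq_iff)
qed (auto simp: edges_def)

lemma simple_graph_edges: "simple_graph N edges"
  unfolding simple_graph_def edges_def adjacent_def by auto

lemma less_N_iff: "x < N \<longleftrightarrow> x div t < 3 * m"
  unfolding N_def using t_pos by (metis div_less_iff_less_mult mult.assoc mult.commute)

lemma mem_block_iff: "x \<in> block c \<longleftrightarrow> x div t = c"
proof
  assume "x \<in> block c"
  then show "x div t = c" unfolding block_def by (intro div_nat_eqI) auto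
next
  assume "x div t = c"
  moreover have "x = t * (x div t) + x mod t" by simp
  moreover have "x mod t < t" using t_pos by simp
  ultimately show "x \<in> block c"
    unfolding block_def by (metis atLeastLessThan_iff add_less_cancel_left le_add1)
qed

lemma finite_block: "finite (block c)"
  by (simp add: block_def)

lemma card_block: "card (block c) = t"
  by (simp add: block_def)

lemma block_subset: "c < 3 * m \<Longrightarrow> block c \<subseteq> {0..<N}"
  using less_N_iff mem_block_iff by auto

lemma A_vertex_iff_block: "x \<in> block c \<Longrightarrow> A_vertex x \<longleftrightarrow> c mod 3 = 0"
  by (simp add: mem_block_iff A_vertex_def)

lemma edge_in_block:
  "c < 3 * m \<Longrightarrow> x \<in> block c \<Longrightarrow> y \<in> block c \<Longrightarrow> x \<noteq> y \<Longrightarrow> {x, y} \<in> edges"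
  by (auto simp: mem_edges_iff adjacent_def mem_block_iff less_N_iff)

lemma partner_div [simp]: "partner c w div t = c"
  unfolding partner_def using t_pos by simp

lemma partner_mod [simp]: "partner c w mod t = w mod t"
  unfolding partner_def using t_pos by simp

lemma partner_in_block: "partner c w \<in> block c"
  by (simp add: mem_block_iff)

lemma adjacent_partner:
  assumes "w < N" "c div 3 = w div t div 3" "(c mod 3 = 0) \<noteq> A_vertex w"
  shows "adjacent w (partner c w)" "partner c w < N"
proof -
  have "c \<noteq> w div t" using assms(3) unfolding A_vertex_def by auto
  then have "w \<noteq> partner c w" by (metis partner_div)
  then show "adjacent w (partner c w)"
    using assms unfolding adjacent_def A_vertex_def by auto
  have "c < 3 * m" using assms(1,2) less_3_mult_if_div_3_eq unfolding less_N_iff by blast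
  then show "partner c w < N" by (simp add: less_N_iff)
qed

lemma cross_blocks_eq:
  "cross_blocks b =
     (if b mod 3 = 0 then {3 * (b div 3) + 1, 3 * (b div 3) + 2} else {3 * (b div 3)})"
proof -
  have "(c div 3 = b div 3 \<and> (c mod 3 = 0) \<noteq> (b mod 3 = 0)) \<longleftrightarrow>
     (if b mod 3 = 0 then c = 3 * (b div 3) + 1 \<or> c = 3 * (b div 3) + 2 else c = 3 * (b div 3))"
    for c :: nat
    by presburger
  then show ?thesis unfolding cross_blocks_def by auto
qed

lemma card_cross_blocks: "card (cross_blocks b) = (if b mod 3 = 0 then 2 else 1)"
  by (simp add: cross_blocks_eq)

lemma neighbours_eq:
  assumes "w < N"
  shows "{x. {x, w} \<in> edges} =
    (block (w div t) - {w}) \<union> (\<lambda>c. partner c w) ` cross_blocks (w div t)"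
proof (intro equalityI subsetI)
  fix x assume "x \<in> {x. {x, w} \<in> edges}"
  then have x: "x < N" "adjacent x w" by (simp_all add: mem_edges_iff)
  show "x \<in> (block (w div t) - {w}) \<union> (\<lambda>c. partner c w) ` cross_blocks (w div t)"
  proof (cases "x div t = w div t")
    case True
    then show ?thesis using x(2) by (simp add: mem_block_iff adjacent_def)
  next
    case False
    then have "x div t div 3 = w div t div 3" "x mod t = w mod t" "A_vertex x \<noteq> A_vertex w"
      using x(2) unfolding adjacent_def by auto
    then have "x div t \<in> cross_blocks (w div t)"
      unfolding A_vertex_def cross_blocks_def by auto
    moreover have "x = partner (x div t) w"
      using \<open>x mod t = w mod t\<close> by (metis partner_def mult_div_mod_eq)
    ultimately show ?thesis by blast
  qed
next
  fix x assume "x \<in> (block (w div t) - {w}) \<union> (\<lambda>c. partner c w) ` cross_blocks (w div t)"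
  then consider "x \<in> block (w div t)" "x \<noteq> w"
    | c where "c \<in> cross_blocks (w div t)" "x = partner c w" by blast
  then show "x \<in> {x. {x, w} \<in> edges}"
  proof cases
    case 1
    then show ?thesis using assms by (simp add: mem_edges_iff adjacent_def mem_block_iff less_N_iff)
  next
    case 2
    then have "adjacent w x" "x < N"
      using adjacent_partner[OF assms] by (auto simp: cross_blocks_def A_vertex_def)
    then show ?thesis using assms by (simp add: mem_edges_iff adjacent_sym)
  qed
qed

lemma deg_edges:
  assumes "w < N"
  shows "deg edges w = t + (if A_vertex w then 1 else 0)"
proof -
  have "(block (w div t) - {w}) \<inter> (\<lambda>c. partner c w) ` cross_blocks (w div t) = {}"
    by (auto simp: mem_block_iff cross_blocks_def)
  moreover have "inj_on (\<lambda>c. partner c w) (cross_blocks (w div t))"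
    by (metis inj_onI partner_div)
  moreover have "card (block (w div t) - {w}) = t - 1"
    by (simp add: card_block finite_block mem_block_iff)
  moreover have "finite (cross_blocks (w div t))"
    by (simp add: cross_blocks_eq)
  ultimately have "deg edges w = t - 1 + card (cross_blocks (w div t))"
    unfolding deg_def neighbours_eq[OF assms]
    by (simp add: card_Un_disjoint finite_block card_image)
  then show ?thesis using t_pos by (simp add: card_cross_blocks A_vertex_def)
qed

lemma same_type_walk_in_block:
  assumes "successively (\<lambda>a b. {a, b} \<in> edges) (x # xs)" "\<forall>y\<in>set xs. A_vertex y = A_vertex x"
  shows "set (x # xs) \<subseteq> block (x div t)"
  using assms
proof (induction xs arbitrary: x)
  case Nil
  then show ?case by (simp add: mem_block_iff)
next
  case (Cons y ys)
  have "{x, y} \<in> edges" "A_vertex y = A_vertex x" using Cons.prems by auto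
  then have "y div t = x div t" by (auto simp: mem_edges_iff adjacent_def)
  moreover have "set (y # ys) \<subseteq> block (y div t)" using Cons.IH[of y] Cons.prems by auto
  ultimately show ?case by (simp add: mem_block_iff)
qed

lemma length_same_type_walk_le:
  assumes "distinct xs" "successively (\<lambda>a b. {a, b} \<in> edges) xs" "\<forall>y\<in>set xs. A_vertex y = c"
  shows "length xs \<le> t"
proof (cases xs)
  case Nil
  then show ?thesis by simp
next
  case (Cons x ys)
  then have "set xs \<subseteq> block (x div t)" using same_type_walk_in_block assms(2,3) by auto
  then have "card (set xs) \<le> t" using card_mono[OF finite_block] card_block by metis
  then show ?thesis using distinct_card[OF assms(1)] by simp
qed

text \<open>In an ascending path the B-vertices (degree \<open>t\<close>) come first and the A-vertices
  (degree \<open>t + 1\<close>) last; each of the two runs stays inside one block.\<close>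

lemma length_ascending_path_le:
  assumes "is_path N edges p" "sorted_wrt (\<lambda>a b. deg edges a \<le> deg edges b) p"
  shows "length p \<le> 2 * t"
proof -
  let ?low = "takeWhile (\<lambda>x. deg edges x < t + 1) p"
  let ?high = "dropWhile (\<lambda>x. deg edges x < t + 1) p"
  have "distinct (?low @ ?high)" "successively (\<lambda>a b. {a, b} \<in> edges) (?low @ ?high)"
    and sub: "set p \<subseteq> {0..<N}"
    using assms(1) by (simp_all add: is_path_iff_successively)
  then have walks: "distinct ?low" "distinct ?high"
    "successively (\<lambda>a b. {a, b} \<in> edges) ?low" "successively (\<lambda>a b. {a, b} \<in> edges) ?high"
    by (simp_all add: successively_append_iff del: takeWhile_dropWhile_id)
  have deg_p: "deg edges x = t + (if A_vertex x then 1 else 0)" if "x \<in> set p" for x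
    using that sub deg_edges by auto
  have "\<forall>y\<in>set ?low. A_vertex y = False"
  proof
    fix y assume "y \<in> set ?low"
    then have "y \<in> set p" "deg edges y < t + 1" by (auto dest: set_takeWhileD)
    then show "A_vertex y = False" using deg_p[of y] by (cases "A_vertex y") auto
  qed
  moreover have "\<forall>y\<in>set ?high. A_vertex y = True"
  proof
    fix y assume y: "y \<in> set ?high"
    then have "y \<in> set p" by (rule set_dropWhileD)
    moreover have "t + 1 \<le> deg edges y" using sorted_wrt_dropWhile_ge[OF assms(2) y] .
    ultimately show "A_vertex y = True" using deg_p[of y] by (cases "A_vertex y") auto
  qed
  ultimately have "length ?low \<le> t" "length ?high \<le> t"
    using walks length_same_type_walk_le by blast+
  moreover have "length p = length ?low + length ?high"
    by (simp flip: length_append)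
  ultimately show ?thesis by linarith
qed

lemma mp_edges_le: "mp N edges \<le> 2 * t"
proof (rule mp_le)
  show "0 < N" using t_pos m_pos by (simp add: N_def)
next
  fix p assume "degree_monotone_path N edges p"
  then have path: "is_path N edges p"
    and monotone: "sorted_wrt (\<lambda>a b. deg edges a \<le> deg edges b) p \<or>
      sorted_wrt (\<lambda>a b. deg edges b \<le> deg edges a) p"
    by (simp_all add: degree_monotone_path_iff_sorted_wrt)
  from monotone show "length p \<le> 2 * t"
  proof
    assume "sorted_wrt (\<lambda>a b. deg edges a \<le> deg edges b) p"
    then show ?thesis using length_ascending_path_le path by blast
  next
    assume "sorted_wrt (\<lambda>a b. deg edges b \<le> deg edges a) p"
    then have "sorted_wrt (\<lambda>a b. deg edges a \<le> deg edges b) (rev p)"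
      by (simp add: sorted_wrt_rev)
    then have "length (rev p) \<le> 2 * t"
      using length_ascending_path_le path is_path_rev by blast
    then show ?thesis by simp
  qed
qed

lemma B_block_of_A_vertex:
  assumes "w < N" "A_vertex w"
  obtains b where "b < 3 * m" "b div 3 = w div t div 3" "b mod 3 \<noteq> 0"
proof
  define q where "q = w div t div 3"
  have "w div t = 3 * q"
    using assms(2) mult_div_mod_eq[of 3 "w div t"] unfolding q_def A_vertex_def by simp
  then show "(3 * q + 1) div 3 = w div t div 3" "(3 * q + 1) mod 3 \<noteq> 0" by simp_all
  then show "3 * q + 1 < 3 * m"
    using assms(1) less_3_mult_if_div_3_eq unfolding less_N_iff by blast
qed

lemma blocks_of_B_vertex:
  assumes "w < N" "\<not> A_vertex w"
  obtains a b where "a < 3 * m" "a mod 3 = 0" "a div 3 = w div t div 3"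
    "b div 3 = a div 3" "b mod 3 \<noteq> 0" "b \<noteq> w div t"
proof
  define q where "q = w div t div 3"
  define r where "r = w div t mod 3"
  have r: "r \<noteq> 0" "r < 3" using assms(2) unfolding r_def A_vertex_def by simp_all
  have w: "w div t = 3 * q + r" unfolding q_def r_def by simp
  show "3 * q < 3 * m" using assms(1) w unfolding less_N_iff by linarith
  show "3 * q mod 3 = 0" "3 * q div 3 = w div t div 3" unfolding q_def by simp_all
  define s where "s = 3 - r"
  have s: "s \<noteq> 0" "s < 3" "s \<noteq> r" using r unfolding s_def by arith+
  show "(3 * q + s) div 3 = 3 * q div 3" "(3 * q + s) mod 3 \<noteq> 0" using s by simp_all
  show "3 * q + s \<noteq> w div t" using w s by simp
qed

lemma walk_in_block:
  assumes "c < 3 * m" "X \<subseteq> block c" "x \<in> X"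
  obtains L where "distinct (x # L)" "set (x # L) = X"
    "successively (\<lambda>a b. {a, b} \<in> edges) (x # L)"
proof
  let ?L = "sorted_list_of_set (X - {x})"
  have "finite X" using assms(2) finite_block by (rule finite_subset)
  then show distinct: "distinct (x # ?L)" and set: "set (x # ?L) = X" using assms(3) by auto
  show "successively (\<lambda>a b. {a, b} \<in> edges) (x # ?L)"
  proof (rule successively_if_pairwise)
    fix y z assume "y \<in> set (x # ?L)" "z \<in> set (x # ?L)" "y \<noteq> z"
    then show "{y, z} \<in> edges" using edge_in_block[OF assms(1)] set assms(2) by blast
  qed (rule distinct)
qed

lemma cross_walk:
  assumes "a < 3 * m" "a mod 3 = 0" "b div 3 = a div 3" "b mod 3 \<noteq> 0"
    and "X \<subseteq> block a" "x \<in> X"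
  obtains L1 L2 where "distinct (x # L1 @ L2)" "set (x # L1) = X" "set L2 = block b"
    "successively (\<lambda>p q. {p, q} \<in> edges) (x # L1 @ L2)"
proof -
  obtain L1 where L1: "distinct (x # L1)" "set (x # L1) = X"
      "successively (\<lambda>p q. {p, q} \<in> edges) (x # L1)"
    using walk_in_block[OF assms(1,5,6)] .
  define w where "w = last (x # L1)"
  have "w \<in> block a" using L1(2) assms(5) unfolding w_def by (metis last_in_set list.discI subsetD)
  then have w: "w < N" "w div t = a" "A_vertex w"
    using block_subset[OF assms(1)] assms(2) by (auto simp: mem_block_iff A_vertex_def)
  let ?y = "partner b w"
  have "b < 3 * m" using less_3_mult_if_div_3_eq[OF assms(3,1)] .
  have "{w, ?y} \<in> edges"
    using adjacent_partner[of w b] w assms(2-4) by (simp add: mem_edges_iff)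
  obtain L2 where L2: "distinct (?y # L2)" "set (?y # L2) = block b"
      "successively (\<lambda>p q. {p, q} \<in> edges) (?y # L2)"
    using walk_in_block[OF \<open>b < 3 * m\<close> subset_refl partner_in_block] .
  have "X \<inter> block b = {}" using assms(2,4,5) by (auto simp: mem_block_iff)
  then have "distinct ((x # L1) @ (?y # L2))" using L1(1,2) L2(1,2) by (simp only: distinct_append)
  moreover have "successively (\<lambda>p q. {p, q} \<in> edges) ((x # L1) @ (?y # L2))"
    using L1(3) L2(3) \<open>{w, ?y} \<in> edges\<close> unfolding w_def by (simp only: successively_append_iff) simp
  ultimately show thesis using that[of L1 "?y # L2"] L1(2) L2(2) by simp
qed

lemma walk_to_B_vertex:
  assumes "v < N" "\<not> A_vertex v"
  obtains a L where "a < 3 * m" "a mod 3 = 0" "distinct L" "set L = block a"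
    "successively (\<lambda>p q. {p, q} \<in> edges) (L @ [v])"
proof -
  obtain a where a: "a < 3 * m" "a mod 3 = 0" "a div 3 = v div t div 3"
    using blocks_of_B_vertex[OF assms] by metis
  let ?x = "partner a v"
  have "{?x, v} \<in> edges"
    using adjacent_partner[OF assms(1)] a(2,3) assms by (simp add: mem_edges_iff adjacent_sym)
  obtain L where walk: "distinct (?x # L)" "set (?x # L) = block a"
      "successively (\<lambda>p q. {p, q} \<in> edges) (?x # L)"
    using walk_in_block[OF a(1) subset_refl partner_in_block] .
  have "successively (\<lambda>p q. {p, q} \<in> edges) (rev (?x # L) @ [v])"
    using walk(3) \<open>{?x, v} \<in> edges\<close>
    by (simp only: successively_append_iff successively_rev) (simp add: insert_commute)
  then show thesis using that[OF a(1,2), of "rev (?x # L)"] walk(1,2) by simp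
qed

context
  fixes u v :: nat
  assumes u_less: "u < N" and v_less: "v < N" and u_ne_v: "u \<noteq> v"
    and not_adjacent: "\<not> adjacent u v"
begin

lemma deg_added_edge:
  "w < N \<Longrightarrow> deg (insert {u, v} edges) w =
     t + (if A_vertex w then 1 else 0) + (if w = u \<or> w = v then 1 else 0)"
  using deg_insert_edge[OF simple_graph_edges u_ne_v] deg_edges not_adjacent
  by (simp add: mem_edges_iff)

lemma successively_added_edge:
  "successively (\<lambda>a b. {a, b} \<in> edges) xs \<Longrightarrow>
     successively (\<lambda>a b. {a, b} \<in> insert {u, v} edges) xs"
  by (erule successively_mono) simp

lemma deg_added_edge_block:
  assumes "c < 3 * m" "y \<in> block c" "y \<noteq> u" "y \<noteq> v"
  shows "deg (insert {u, v} edges) y = t + (if c mod 3 = 0 then 1 else 0)"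
  using deg_added_edge block_subset[OF assms(1)] A_vertex_iff_block[OF assms(2)] assms(2-4)
  by auto

lemma long_path_if_A_A:
  assumes "A_vertex u" "A_vertex v"
  shows "\<exists>p. degree_monotone_path N (insert {u, v} edges) p \<and> 2 * t + 1 \<le> length p"
proof -
  let ?d = "deg (insert {u, v} edges)"
  define a where "a = u div t"
  have a: "a < 3 * m" "a mod 3 = 0" "u \<in> block a"
    using u_less assms(1) by (simp_all add: a_def less_N_iff A_vertex_def mem_block_iff)
  obtain b where b: "b < 3 * m" "b div 3 = a div 3" "b mod 3 \<noteq> 0"
    using B_block_of_A_vertex[OF u_less assms(1)] unfolding a_def .
  obtain L1 L2 where walk: "distinct (u # L1 @ L2)" "set (u # L1) = block a" "set L2 = block b"
      "successively (\<lambda>p q. {p, q} \<in> edges) (u # L1 @ L2)"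
    using cross_walk[OF a(1,2) b(2,3) subset_refl a(3)] .
  have v_out: "v \<notin> block a" "v \<notin> block b"
    using not_adjacent u_ne_v assms(2) b(3)
    by (auto simp: a_def mem_block_iff adjacent_def A_vertex_def)
  have deg_L1: "?d y = t + 1" if "y \<in> set L1" for y
    using that walk(1,2) v_out deg_added_edge_block[OF a(1), of y] a(2) by auto
  have deg_L2: "?d y = t" if "y \<in> set L2" for y
    using that walk(1,3) v_out deg_added_edge_block[OF b(1), of y] b(3) by auto
  have "?d u = t + 2" "?d v = t + 2" using deg_added_edge u_less v_less assms by simp_all
  let ?p = "v # u # L1 @ L2"
  have "degree_monotone_path N (insert {u, v} edges) ?p"
  proof (rule degree_monotone_pathI)
    show "distinct ?p" using walk(1,2,3) v_out by auto
    show "set ?p \<subseteq> {0..<N}" using walk(2,3) u_less v_less block_subset a(1) b(1) by auto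
    show "successively (\<lambda>a b. {a, b} \<in> insert {u, v} edges) ?p"
      using successively_added_edge[OF walk(4)] by (simp add: insert_commute)
    have "sorted_wrt (\<lambda>a b. ?d b \<le> ?d a) L1" "sorted_wrt (\<lambda>a b. ?d b \<le> ?d a) L2"
      using sorted_wrt_const[of L1 ?d "t + 1" "\<lambda>x y. y \<le> x"]
        sorted_wrt_const[of L2 ?d t "\<lambda>x y. y \<le> x"] deg_L1 deg_L2 by auto
    then show "sorted_wrt (\<lambda>a b. ?d b \<le> ?d a) ?p"
      using deg_L1 deg_L2 \<open>?d u = t + 2\<close> \<open>?d v = t + 2\<close> by (auto simp: sorted_wrt_append)
  qed simp
  moreover have "length ?p = 2 * t + 1"
    using walk(1,2,3) distinct_card[of "u # L1"] distinct_card[of L2] card_block by simp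
  ultimately show ?thesis by (intro exI[of _ ?p]) simp
qed

lemma long_path_if_A_B:
  assumes "A_vertex u" "\<not> A_vertex v"
  shows "\<exists>p. degree_monotone_path N (insert {u, v} edges) p \<and> 2 * t + 1 \<le> length p"
proof -
  let ?d = "deg (insert {u, v} edges)"
  obtain a b where ab: "a < 3 * m" "a mod 3 = 0" "a div 3 = v div t div 3"
      "b div 3 = a div 3" "b mod 3 \<noteq> 0" "b \<noteq> v div t"
    using blocks_of_B_vertex[OF v_less assms(2)] .
  have "b < 3 * m" using less_3_mult_if_div_3_eq[OF ab(4,1)] .
  let ?x = "partner a v"
  have "adjacent v ?x" "?x < N" using adjacent_partner[OF v_less] ab(2,3) assms(2) by simp_all
  then have x: "?x \<in> block a - {u}" using not_adjacent partner_in_block by (auto simp: adjacent_sym)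
  obtain L1 L2 where walk: "distinct (?x # L1 @ L2)" "set (?x # L1) = block a - {u}"
      "set L2 = block b" "successively (\<lambda>p q. {p, q} \<in> edges) (?x # L1 @ L2)"
    using cross_walk[OF ab(1,2,4,5) _ x] by blast
  have u_out: "u \<notin> block b" using assms(1) ab(5) A_vertex_iff_block by auto
  have v_out: "v \<notin> block a" "v \<notin> block b"
    using assms(2) ab(2,6) A_vertex_iff_block mem_block_iff by auto
  have deg_L1: "?d y = t + 1" if "y \<in> set (?x # L1)" for y
  proof -
    have "y \<in> block a" "y \<noteq> u" "y \<noteq> v" using that walk(2) v_out by blast+
    then show ?thesis using deg_added_edge_block[OF ab(1)] ab(2) by simp
  qed
  have deg_L2: "?d y = t" if "y \<in> set L2" for y
  proof -
    have "y \<in> block b" "y \<noteq> u" "y \<noteq> v" using that walk(3) u_out v_out by blast+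
    then show ?thesis using deg_added_edge_block[OF \<open>b < 3 * m\<close>] ab(5) by simp
  qed
  have "?d u = t + 2" "?d v = t + 1" using deg_added_edge u_less v_less assms by simp_all
  let ?p = "u # v # ?x # L1 @ L2"
  have "degree_monotone_path N (insert {u, v} edges) ?p"
  proof (rule degree_monotone_pathI)
    show "distinct ?p" using walk(1,2,3) u_out v_out u_ne_v by auto
    show "set ?p \<subseteq> {0..<N}"
      using walk(2,3) u_less v_less \<open>?x < N\<close> block_subset ab(1) \<open>b < 3 * m\<close> by auto
    have "{v, ?x} \<in> edges" using \<open>adjacent v ?x\<close> \<open>?x < N\<close> v_less by (simp add: mem_edges_iff)
    then show "successively (\<lambda>a b. {a, b} \<in> insert {u, v} edges) ?p"
      using successively_added_edge[OF walk(4)] by simp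
    have "sorted_wrt (\<lambda>a b. ?d b \<le> ?d a) (?x # L1)" "sorted_wrt (\<lambda>a b. ?d b \<le> ?d a) L2"
      using sorted_wrt_const[of "?x # L1" ?d "t + 1" "\<lambda>x y. y \<le> x"]
        sorted_wrt_const[of L2 ?d t "\<lambda>x y. y \<le> x"] deg_L1 deg_L2 by auto
    then show "sorted_wrt (\<lambda>a b. ?d b \<le> ?d a) ?p"
      using deg_L1 deg_L2 \<open>?d u = t + 2\<close> \<open>?d v = t + 1\<close> by (auto simp: sorted_wrt_append)
  qed simp
  moreover have "t \<le> card (block a - {u}) + 1"
    using card_block[of a] t_pos by (simp add: card_Diff_singleton_if finite_block)
  then have "2 * t + 1 \<le> length ?p"
    using walk(1,2,3) distinct_card[of "?x # L1"] distinct_card[of L2] card_block by simp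
  ultimately show ?thesis by blast
qed

lemma long_path_if_B_B:
  assumes "\<not> A_vertex u" "\<not> A_vertex v"
  shows "\<exists>p. degree_monotone_path N (insert {u, v} edges) p \<and> 2 * t + 1 \<le> length p"
proof -
  let ?d = "deg (insert {u, v} edges)"
  obtain a L1 where walk1: "a < 3 * m" "a mod 3 = 0" "distinct L1" "set L1 = block a"
      "successively (\<lambda>p q. {p, q} \<in> edges) (L1 @ [v])"
    using walk_to_B_vertex[OF v_less assms(2)] .
  define c where "c = u div t"
  have c: "c < 3 * m" "c mod 3 \<noteq> 0" "u \<in> block c"
    using u_less assms(1) by (simp_all add: c_def less_N_iff A_vertex_def mem_block_iff)
  obtain L2 where walk2: "distinct (u # L2)" "set (u # L2) = block c"
      "successively (\<lambda>p q. {p, q} \<in> edges) (u # L2)"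
    using walk_in_block[OF c(1) subset_refl c(3)] .
  have disjoint: "block a \<inter> block c = {}" using walk1(2) c(2) by (auto simp: mem_block_iff)
  have v_out: "v \<notin> block a" "v \<notin> block c"
    using assms(2) walk1(2) A_vertex_iff_block not_adjacent u_ne_v
    by (auto simp: c_def mem_block_iff adjacent_def)
  have deg_L1: "?d y = t + 1" if "y \<in> set L1" for y
    using that walk1(4) v_out disjoint c(3) deg_added_edge_block[OF walk1(1), of y] walk1(2)
    by auto
  have deg_L2: "?d y = t" if "y \<in> set L2" for y
    using that walk2(1,2) v_out deg_added_edge_block[OF c(1), of y] c(2) by auto
  have "?d u = t + 1" "?d v = t + 1" using deg_added_edge u_less v_less assms by simp_all
  let ?p = "L1 @ v # u # L2"
  have "degree_monotone_path N (insert {u, v} edges) ?p"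
  proof (rule degree_monotone_pathI)
    show "distinct ?p" using walk1(3,4) walk2(1,2) disjoint v_out by auto
    show "set ?p \<subseteq> {0..<N}"
      using walk1(4) walk2(2) v_less block_subset walk1(1) c(1) by auto
    show "successively (\<lambda>a b. {a, b} \<in> insert {u, v} edges) ?p"
      using successively_added_edge[OF walk1(5)] successively_added_edge[OF walk2(3)]
      by (simp add: successively_append_iff insert_commute)
    have "sorted_wrt (\<lambda>a b. ?d b \<le> ?d a) L1" "sorted_wrt (\<lambda>a b. ?d b \<le> ?d a) L2"
      using sorted_wrt_const[of L1 ?d "t + 1" "\<lambda>x y. y \<le> x"]
        sorted_wrt_const[of L2 ?d t "\<lambda>x y. y \<le> x"] deg_L1 deg_L2 by auto
    then show "sorted_wrt (\<lambda>a b. ?d b \<le> ?d a) ?p"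
      using deg_L1 deg_L2 \<open>?d u = t + 1\<close> \<open>?d v = t + 1\<close> by (auto simp: sorted_wrt_append)
  qed (simp add: walk2)
  moreover have "length ?p = 2 * t + 1"
    using walk1(3,4) walk2(1,2) distinct_card[of L1] distinct_card[of "u # L2"] card_block
    by simp
  ultimately show ?thesis by (intro exI[of _ ?p]) simp
qed

end

lemma k_saturated_edges: "k_saturated (2 * t + 1) N edges"
  unfolding k_saturated_def
proof (intro conjI ballI impI)
  show "simple_graph N edges" by (rule simple_graph_edges)
  show "mp N edges \<le> 2 * t + 1 - 1" using mp_edges_le by simp
  fix u v assume "u \<in> {0..<N}" "v \<in> {0..<N}" "u \<noteq> v" "{u, v} \<notin> edges"
  then have uv: "u < N" "v < N" "u \<noteq> v" "\<not> adjacent u v" by (auto simp: mem_edges_iff)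
  then have vu: "v < N" "u < N" "v \<noteq> u" "\<not> adjacent v u" by (auto simp: adjacent_sym)
  consider "A_vertex u" "A_vertex v" | "A_vertex u" "\<not> A_vertex v"
    | "\<not> A_vertex u" "A_vertex v" | "\<not> A_vertex u" "\<not> A_vertex v" by blast
  then have "\<exists>p. degree_monotone_path N (insert {u, v} edges) p \<and> 2 * t + 1 \<le> length p"
  proof cases
    case 1
    then show ?thesis by (rule long_path_if_A_A[OF uv])
  next
    case 2
    then show ?thesis by (rule long_path_if_A_B[OF uv])
  next
    case 3
    then show ?thesis using long_path_if_A_B[OF vu] by (simp add: insert_commute)
  next
    case 4
    then show ?thesis by (rule long_path_if_B_B[OF uv])
  qed
  then show "2 * t + 1 \<le> mp N (insert {u, v} edges)" using length_le_mp le_trans by blast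
qed

lemma sum_over_blocks: "(\<Sum>w<N. f w) = (\<Sum>c<3 * m. \<Sum>w\<in>block c. f w)"
  using sum.nat_group[of f t "3 * m"] unfolding N_def block_def by (simp add: ac_simps)

lemma sum_deg_edges: "(\<Sum>w<N. deg edges w) = N * t + t * m"
proof -
  have block_count: "(\<Sum>w\<in>block c. if A_vertex w then 1 else 0) = t * (if c mod 3 = 0 then 1 else 0)"
    for c
  proof -
    have "(\<Sum>w\<in>block c. if A_vertex w then 1 else 0) = (\<Sum>w\<in>block c. if c mod 3 = 0 then 1 else (0::nat))"
      by (rule sum.cong) (simp_all add: A_vertex_iff_block)
    then show ?thesis by (simp add: card_block)
  qed
  have "(\<Sum>w<N. deg edges w) = (\<Sum>w<N. t + (if A_vertex w then 1 else 0))"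
    by (simp add: deg_edges)
  also have "\<dots> = N * t + (\<Sum>c<3 * m. t * (if c mod 3 = 0 then 1 else 0))"
    by (simp add: sum.distrib sum_over_blocks[of "\<lambda>w. if A_vertex w then 1 else 0"] block_count)
  also have "(\<Sum>c<3 * m. t * (if c mod 3 = 0 then 1 else 0)) = t * card {c \<in> {..<3 * m}. c mod 3 = 0}"
    by (simp add: sum_distrib_left[symmetric] sum.If_cases Int_def)
  finally show ?thesis using card_multiples_of_3_less[of m] by simp
qed

lemma card_edges: "2 * card edges = N * t + t * m"
  using sum_deg_eq_twice_card[OF simple_graph_edges] sum_deg_edges by simp

end

theorem theorem2p5:
  fixes k n :: nat
  assumes "k \<ge> 3" and "odd k" and "n > 0" and "(3 * (k - 1) div 2) dvd n"
  shows "12 * h n k \<le> n * (3 * k - 1)"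
proof -
  obtain t where k: "k = 2 * t + 1" using assms(2) by (rule oddE)
  then have "0 < t" using assms(1) by simp
  from assms(4) obtain m where n: "n = 3 * t * m" using k by (auto elim!: dvdE)
  then have "0 < m" using assms(3) by simp
  interpret block_graph t m using \<open>0 < t\<close> \<open>0 < m\<close> by unfold_locales
  have N: "N = n" using n by (simp add: N_def)
  have "h n k \<le> card edges" using h_le_card k_saturated_edges k N by simp
  moreover have "2 * card edges = n * t + t * m" using card_edges N by simp
  moreover have "n * (3 * k - 1) = 6 * (n * t) + 6 * (t * m)" using k n by (simp add: algebra_simps)
  ultimately show ?thesis by linarith
qed

end
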